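(* Let $M$ be an $\mathbf{FB}$-module and $a:\mathrm{Sym}(\mathbf V)\otimes M\to\mathbf V\otimes M$ a map, and write, for $B\subseteq S$ and $x\in M(S\setminus B)$, $$a(t^B\otimes x)=\sum_{i\in B}t^i\otimes\omega^{S\setminus\{i\}}_{B\setminus\{i\}}(x)+\sum_{i\in S\setminus B}t^i\otimes\alpha^S_{i,B}(x),$$ with $\omega^T_C:M(T\setminus C)\to M(T)$ and $\alpha^S_{i,B}:M(S\setminus B)\to M(S\setminus\{i\})$. Then $a$ defines a representation of $\underline W(\mathbf V)$ if and only if, for every finite set $S$ and disjoint subsets $A,B\subseteq S$: (a) $\alpha$ and $\omega$ commute with themselves and each other; (b) for $j\in B$ and $i\in S\setminus(A\cup B)$, $\alpha^{S\setminus\{i\}}_{j,A}\circ\alpha^{S\setminus A}_{i,B}=\alpha^{S\setminus\{j\}}_{i,(A\cup B)\setminus\{j\}}$; (c) for $j\in B$, $\alpha^S_{j,A}\circ\omega^{S\setminus A}_B=\omega^{S\setminus\{j\}}_{(A\cup B)\setminus\{j\}}$.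
   Context: $k$ is a commutative ring; $\mathbf{FB}$-modules are functors from finite sets and bijections to $k$-modules, $(M\otimes N)(S)=\bigoplus_{T\subseteq S}M(T)\otimes N(S\setminus T)$, symmetry $\tau$. $\mathbf V$ is $k$ on singletons, $0$ otherwise, basis $t^i$. $\mathrm{Sym}(\mathbf V)=\bigoplus_n\mathrm{Sym}^n(\mathbf V)$, $\mathrm{Sym}^n(\mathbf V)(S)$ free with basis $t^S$ if $|S|=n$, else $0$. $m(t^A\otimes t^B)=t^{A\cup B}$; $\Delta(t^B)=\sum_{j\in B}t^j\otimes t^{B\setminus\{j\}}\in\mathbf V\otimes\mathrm{Sym}(\mathbf V)$. Representation of $\underline W(\mathbf V)$: $[a_1,a_2]=a'-a''$, where $a_2=\mathrm{id}\otimes a$, $a_1=\tau(\mathrm{id}\otimes a)\tau$, $[a_1,a_2]=a_1a_2-a_2a_1$ as maps $\mathrm{Sym}\otimes\mathrm{Sym}\otimes M\to\mathbf V\otimes\mathbf V\otimes M$, $a'=(\mathrm{id}_{\mathbf V}\otimes a)(\mathrm{id}_{\mathbf V}\otimes m\otimes\mathrm{id})(\tau\otimes\mathrm{id}\otimes\mathrm{id})(\mathrm{id}\otimes\Delta\otimes\mathrm{id})$, $a''=\tau a'\tau$. Operations: $\alpha$ is the family $\alpha^S_{\{i\},B}=\alpha^S_{i,B}$ and $\omega$ the family $\omega^S_{\emptyset,B}=\omega^S_B$ of maps $M(S\setminus B)\to M(S\setminus A)$ indexed by disjoint subsets, natural in bijections. Families $\phi,\psi$ commute if for every finite $S$ and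 pairwise disjoint $A,B,C,D\subseteq S$ for which the maps are defined, $\psi^{S\setminus A}_{C,D}\circ\phi^{S\setminus D}_{A,B}=\phi^{S\setminus C}_{A,B}\circ\psi^{S\setminus B}_{C,D}$ (self-commuting: $\psi=\phi$). *)

theory Defs
  imports Main "HOL.Modules"
begin

text \<open>
Finite sets are finite subsets of a label type 'a (assumed infinite, so that
every finite set arises up to bijection).  The ground ring k is a type 'k of class comm_ring_1,
and all k-modules M(S) are submodules of one ambient k-module 'm with scalar action scale.

Since Sym(V)(T) and V(T) are free of rank one (bases t^T, t^i), tensor products of them with M
are written out as direct sums of copies of M:
  (Sym(V) ox M)(S)          = sum_{B subset S} t^B ox M(S-B)          encoded f :: 'a set => 'm
  (V ox M)(S)               = sum_{i in S} t^i ox M(S-{i})            encoded g :: 'a => 'm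
  (Sym ox Sym ox M)(S)      encoded h B1 B2 (coefficient of t^B1 ox t^B2)
  (Sym ox V ox M)(S)        encoded p B i,     (V ox Sym ox M)(S) encoded q i B,
  (V ox V ox M)(S)          encoded g i j,     (Sym ox V ox Sym ox M)(S) encoded r B1 j B2.
Coefficients outside the index range are 0.
\<close>

definition lin_on :: "('k::comm_ring_1 \<Rightarrow> 'm::ab_group_add \<Rightarrow> 'm) \<Rightarrow>
    ('n::ab_group_add \<Rightarrow> 'n \<Rightarrow> bool) \<Rightarrow> ('k \<Rightarrow> 'n \<Rightarrow> 'n) \<Rightarrow> 'm set \<Rightarrow> ('m \<Rightarrow> 'n) \<Rightarrow> bool"
  where "lin_on scale eq scale' X f \<longleftrightarrow>
     (\<forall>x\<in>X. \<forall>y\<in>X. eq (f (x + y)) (f x + f y)) \<and> (\<forall>c. \<forall>x\<in>X. eq (f (scale c x)) (scale' c (f x)))"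

definition FB_module :: "('k::comm_ring_1 \<Rightarrow> 'm::ab_group_add \<Rightarrow> 'm) \<Rightarrow> ('a set \<Rightarrow> 'm set)
    \<Rightarrow> (('a \<Rightarrow> 'a) \<Rightarrow> 'a set \<Rightarrow> 'm \<Rightarrow> 'm) \<Rightarrow> bool"
  where "FB_module scale M act \<longleftrightarrow>
     module scale \<and>
     (\<forall>S. finite S \<longrightarrow> module.subspace scale (M S)) \<and>
     (\<forall>S \<sigma>. finite S \<and> inj_on \<sigma> S \<longrightarrow>
        (\<forall>x\<in>M S. act \<sigma> S x \<in> M (\<sigma> ` S)) \<and> lin_on scale (=) scale (M S) (act \<sigma> S)) \<and>
     (\<forall>S. \<forall>x\<in>M S. finite S \<longrightarrow> act id S x = x) \<and>
     (\<forall>S \<sigma> \<tau>. finite S \<and> inj_on \<sigma> S \<and> inj_on \<tau> (\<sigma> ` S) \<longrightarrow>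
        (\<forall>x\<in>M S. act (\<tau> \<circ> \<sigma>) S x = act \<tau> (\<sigma> ` S) (act \<sigma> S x))) \<and>
     (\<forall>S \<sigma> \<sigma>'. finite S \<and> inj_on \<sigma> S \<and> (\<forall>i\<in>S. \<sigma> i = \<sigma>' i) \<longrightarrow>
        (\<forall>x\<in>M S. act \<sigma> S x = act \<sigma>' S x))"

definition SymM :: "('a set \<Rightarrow> 'm::zero set) \<Rightarrow> 'a set \<Rightarrow> ('a set \<Rightarrow> 'm) set"
  where "SymM M S = {f. (\<forall>B. B \<subseteq> S \<longrightarrow> f B \<in> M (S - B)) \<and> (\<forall>B. \<not> B \<subseteq> S \<longrightarrow> f B = 0)}"

definition VM :: "('a set \<Rightarrow> 'm::zero set) \<Rightarrow> 'a set \<Rightarrow> ('a \<Rightarrow> 'm) set"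
  where "VM M S = {g. (\<forall>i\<in>S. g i \<in> M (S - {i})) \<and> (\<forall>i. i \<notin> S \<longrightarrow> g i = 0)}"

definition SymSymM :: "('a set \<Rightarrow> 'm::zero set) \<Rightarrow> 'a set \<Rightarrow> ('a set \<Rightarrow> 'a set \<Rightarrow> 'm) set"
  where "SymSymM M S = {h. \<forall>B1 B2.
      (B1 \<subseteq> S \<and> B2 \<subseteq> S \<and> B1 \<inter> B2 = {} \<longrightarrow> h B1 B2 \<in> M (S - B1 - B2)) \<and>
      (\<not> (B1 \<subseteq> S \<and> B2 \<subseteq> S \<and> B1 \<inter> B2 = {}) \<longrightarrow> h B1 B2 = 0)}"

definition single :: "'a set \<Rightarrow> 'm::zero \<Rightarrow> 'a set \<Rightarrow> 'm"
  where "single B x = (\<lambda>C. if C = B then x else 0)"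

definition act_SymM :: "(('a \<Rightarrow> 'a) \<Rightarrow> 'a set \<Rightarrow> 'm \<Rightarrow> 'm) \<Rightarrow> ('a \<Rightarrow> 'a) \<Rightarrow> 'a set
    \<Rightarrow> ('a set \<Rightarrow> 'm::zero) \<Rightarrow> 'a set \<Rightarrow> 'm"
  where "act_SymM act \<sigma> S f = (\<lambda>B'. if B' \<subseteq> \<sigma> ` S
      then act \<sigma> (S - (S \<inter> \<sigma> -` B')) (f (S \<inter> \<sigma> -` B')) else 0)"

definition act_VM :: "(('a \<Rightarrow> 'a) \<Rightarrow> 'a set \<Rightarrow> 'm \<Rightarrow> 'm) \<Rightarrow> ('a \<Rightarrow> 'a) \<Rightarrow> 'a set
    \<Rightarrow> ('a \<Rightarrow> 'm::zero) \<Rightarrow> 'a \<Rightarrow> 'm"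
  where "act_VM act \<sigma> S g = (\<lambda>i'. if i' \<in> \<sigma> ` S
      then act \<sigma> (S - {the_inv_into S \<sigma> i'}) (g (the_inv_into S \<sigma> i')) else 0)"

definition FB_map_SymM_VM :: "('k::comm_ring_1 \<Rightarrow> 'm::ab_group_add \<Rightarrow> 'm) \<Rightarrow> ('a set \<Rightarrow> 'm set)
    \<Rightarrow> (('a \<Rightarrow> 'a) \<Rightarrow> 'a set \<Rightarrow> 'm \<Rightarrow> 'm) \<Rightarrow> ('a set \<Rightarrow> ('a set \<Rightarrow> 'm) \<Rightarrow> 'a \<Rightarrow> 'm) \<Rightarrow> bool"
  where "FB_map_SymM_VM scale M act a \<longleftrightarrow>
     (\<forall>S. finite S \<longrightarrow>
        (\<forall>f\<in>SymM M S. a S f \<in> VM M S) \<and>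
        (\<forall>f\<in>SymM M S. \<forall>g\<in>SymM M S. a S (\<lambda>B. f B + g B) = (\<lambda>i. a S f i + a S g i)) \<and>
        (\<forall>c. \<forall>f\<in>SymM M S. a S (\<lambda>B. scale c (f B)) = (\<lambda>i. scale c (a S f i)))) \<and>
     (\<forall>S \<sigma>. finite S \<and> inj_on \<sigma> S \<longrightarrow>
        (\<forall>f\<in>SymM M S. a (\<sigma> ` S) (act_SymM act \<sigma> S f) = act_VM act \<sigma> S (a S f)))"

text \<open>Symmetry tau (swapping the first two tensor factors).\<close>
definition tau :: "('x \<Rightarrow> 'y \<Rightarrow> 'z) \<Rightarrow> 'y \<Rightarrow> 'x \<Rightarrow> 'z"
  where "tau h = (\<lambda>y x. h x y)"

definition idSym_a :: "('a set \<Rightarrow> ('a set \<Rightarrow> 'm::zero) \<Rightarrow> 'a \<Rightarrow> 'm) \<Rightarrow> 'a set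
    \<Rightarrow> ('a set \<Rightarrow> 'a set \<Rightarrow> 'm) \<Rightarrow> 'a set \<Rightarrow> 'a \<Rightarrow> 'm"
  where "idSym_a a S h = (\<lambda>B i. if B \<subseteq> S \<and> i \<in> S - B then a (S - B) (h B) i else 0)"

definition idV_a :: "('a set \<Rightarrow> ('a set \<Rightarrow> 'm::zero) \<Rightarrow> 'a \<Rightarrow> 'm) \<Rightarrow> 'a set
    \<Rightarrow> ('a \<Rightarrow> 'a set \<Rightarrow> 'm) \<Rightarrow> 'a \<Rightarrow> 'a \<Rightarrow> 'm"
  where "idV_a a S q = (\<lambda>i j. if i \<in> S \<and> j \<in> S - {i} then a (S - {i}) (q i) j else 0)"

text \<open>id ox Delta ox id : (Sym ox Sym ox M)(S) -> (Sym ox V ox Sym ox M)(S),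
  Delta(t^B) = sum_{j in B} t^j ox t^(B - {j}).\<close>
definition idDelta :: "('a set \<Rightarrow> 'a set \<Rightarrow> 'm::zero) \<Rightarrow> 'a set \<Rightarrow> 'a \<Rightarrow> 'a set \<Rightarrow> 'm"
  where "idDelta h = (\<lambda>B1 j B2. if j \<notin> B2 then h B1 (insert j B2) else 0)"

text \<open>id_V ox m ox id : (V ox Sym ox Sym ox M)(S) -> (V ox Sym ox M)(S), m(t^A ox t^B) = t^(A Un B).\<close>
definition idV_m :: "('a \<Rightarrow> 'a set \<Rightarrow> 'a set \<Rightarrow> 'm::comm_monoid_add) \<Rightarrow> 'a \<Rightarrow> 'a set \<Rightarrow> 'm"
  where "idV_m s = (\<lambda>j B. \<Sum>B1\<in>Pow B. s j B1 (B - B1))"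

definition a1a2 :: "('a set \<Rightarrow> ('a set \<Rightarrow> 'm::zero) \<Rightarrow> 'a \<Rightarrow> 'm) \<Rightarrow> 'a set
    \<Rightarrow> ('a set \<Rightarrow> 'a set \<Rightarrow> 'm) \<Rightarrow> 'a \<Rightarrow> 'a \<Rightarrow> 'm"
  where "a1a2 a S h = tau (idV_a a S (tau (idSym_a a S h)))"

definition a2a1 :: "('a set \<Rightarrow> ('a set \<Rightarrow> 'm::zero) \<Rightarrow> 'a \<Rightarrow> 'm) \<Rightarrow> 'a set
    \<Rightarrow> ('a set \<Rightarrow> 'a set \<Rightarrow> 'm) \<Rightarrow> 'a \<Rightarrow> 'a \<Rightarrow> 'm"
  where "a2a1 a S h = idV_a a S (tau (idSym_a a S (tau h)))"

definition a_prime :: "('a set \<Rightarrow> ('a set \<Rightarrow> 'm::comm_monoid_add) \<Rightarrow> 'a \<Rightarrow> 'm) \<Rightarrow> 'a set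
    \<Rightarrow> ('a set \<Rightarrow> 'a set \<Rightarrow> 'm) \<Rightarrow> 'a \<Rightarrow> 'a \<Rightarrow> 'm"
  where "a_prime a S h = idV_a a S (idV_m (tau (idDelta h)))"

definition a_dprime :: "('a set \<Rightarrow> ('a set \<Rightarrow> 'm::comm_monoid_add) \<Rightarrow> 'a \<Rightarrow> 'm) \<Rightarrow> 'a set
    \<Rightarrow> ('a set \<Rightarrow> 'a set \<Rightarrow> 'm) \<Rightarrow> 'a \<Rightarrow> 'a \<Rightarrow> 'm"
  where "a_dprime a S h = tau (a_prime a S (tau h))"

definition is_W_rep :: "('a set \<Rightarrow> 'm::ab_group_add set) \<Rightarrow> ('a set \<Rightarrow> ('a set \<Rightarrow> 'm) \<Rightarrow> 'a \<Rightarrow> 'm) \<Rightarrow> bool"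
  where "is_W_rep M a \<longleftrightarrow> (\<forall>S. finite S \<longrightarrow> (\<forall>h\<in>SymSymM M S. \<forall>i j.
      a1a2 a S h i j - a2a1 a S h i j = a_prime a S h i j - a_dprime a S h i j))"

text \<open>A family phi^S_{A,B} : M(S - B) -> M(S - A), defined for index sets A with P A.\<close>
definition commute :: "('a set \<Rightarrow> 'm set) \<Rightarrow> ('a set \<Rightarrow> bool) \<Rightarrow> ('a set \<Rightarrow> 'a set \<Rightarrow> 'a set \<Rightarrow> 'm \<Rightarrow> 'm)
    \<Rightarrow> ('a set \<Rightarrow> bool) \<Rightarrow> ('a set \<Rightarrow> 'a set \<Rightarrow> 'a set \<Rightarrow> 'm \<Rightarrow> 'm) \<Rightarrow> bool"
  where "commute M P\<phi> \<phi> P\<psi> \<psi> \<longleftrightarrow> (\<forall>S A B C D.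
      finite S \<and> A \<subseteq> S \<and> B \<subseteq> S \<and> C \<subseteq> S \<and> D \<subseteq> S \<and>
      A \<inter> B = {} \<and> A \<inter> C = {} \<and> A \<inter> D = {} \<and> B \<inter> C = {} \<and> B \<inter> D = {} \<and> C \<inter> D = {} \<and>
      P\<phi> A \<and> P\<psi> C \<longrightarrow>
      (\<forall>x\<in>M (S - (B \<union> D)). \<psi> (S - A) C D (\<phi> (S - D) A B x) = \<phi> (S - C) A B (\<psi> (S - B) C D x)))"

text \<open>alpha^S_{{i},B} = alpha^S_{i,B}  (alpha S i B);  omega^S_{{},B} = omega^S_B  (omega S B).\<close>
definition alpha_family :: "('a set \<Rightarrow> 'a \<Rightarrow> 'a set \<Rightarrow> 'm \<Rightarrow> 'm) \<Rightarrow> 'a set \<Rightarrow> 'a set \<Rightarrow> 'a set \<Rightarrow> 'm \<Rightarrow> 'm"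
  where "alpha_family \<alpha> = (\<lambda>S A B. \<alpha> S (the_elem A) B)"

definition omega_family :: "('a set \<Rightarrow> 'a set \<Rightarrow> 'm \<Rightarrow> 'm) \<Rightarrow> 'a set \<Rightarrow> 'a set \<Rightarrow> 'a set \<Rightarrow> 'm \<Rightarrow> 'm"
  where "omega_family \<omega> = (\<lambda>S A B. \<omega> S B)"

end

theory Submission
  imports Defs
begin

(* The identity [a1,a2] = a' - a'' is additive in its argument, so it suffices to check it on the
   generators t^B1 ox t^B2 ox x.  By the decomposition of a, its component at t^p ox t^q on such a
   generator is an equation between composites of alphas and omegas, and which equation it is
   depends only on whether p and q lie in B1, in B2 or outside.  Up to the symmetry exchanging the
   two tensor factors, the six possible positions give one instance each of the commutations
   alpha-alpha, omega-omega and alpha-omega, of (b) and of (c), and one trivial identity.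
   Conversely every instance of (a)-(c) arises as such a component, after enlarging S by fresh
   labels which are put into B1 or B2 so that the corresponding components are omegas; this is
   where the infinitude of labels is used. *)

definition decomp_map :: "('a set \<Rightarrow> 'a \<Rightarrow> 'a set \<Rightarrow> 'm \<Rightarrow> 'm) \<Rightarrow> ('a set \<Rightarrow> 'a set \<Rightarrow> 'm \<Rightarrow> 'm)
    \<Rightarrow> 'a set \<Rightarrow> 'a set \<Rightarrow> 'm \<Rightarrow> 'a \<Rightarrow> 'm::zero"
  where "decomp_map \<alpha> \<omega> S B x i =
    (if i \<in> B then \<omega> (S - {i}) (B - {i}) x else if i \<in> S then \<alpha> S i B x else 0)"

(* The components at t^p ox t^q of a1 a2 and of a' on t^B1 ox t^B2 ox x, computed from the
   decomposition of a. *)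
definition decomp_a1a2 :: "('a set \<Rightarrow> 'a \<Rightarrow> 'a set \<Rightarrow> 'm \<Rightarrow> 'm) \<Rightarrow> ('a set \<Rightarrow> 'a set \<Rightarrow> 'm \<Rightarrow> 'm)
    \<Rightarrow> 'a set \<Rightarrow> 'a set \<Rightarrow> 'a set \<Rightarrow> 'm \<Rightarrow> 'a \<Rightarrow> 'a \<Rightarrow> 'm::zero"
  where "decomp_a1a2 \<alpha> \<omega> S B1 B2 x p q =
    (if q \<in> S \<and> p \<in> S - {q} \<and> q \<notin> B1
     then decomp_map \<alpha> \<omega> (S - {q}) B1 (decomp_map \<alpha> \<omega> (S - B1) B2 x q) p else 0)"

definition decomp_a_prime :: "('a set \<Rightarrow> 'a \<Rightarrow> 'a set \<Rightarrow> 'm \<Rightarrow> 'm) \<Rightarrow> ('a set \<Rightarrow> 'a set \<Rightarrow> 'm \<Rightarrow> 'm)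
    \<Rightarrow> 'a set \<Rightarrow> 'a set \<Rightarrow> 'a set \<Rightarrow> 'm \<Rightarrow> 'a \<Rightarrow> 'a \<Rightarrow> 'm::zero"
  where "decomp_a_prime \<alpha> \<omega> S B1 B2 x p q =
    (if p \<in> B2 \<and> q \<in> S - {p} then decomp_map \<alpha> \<omega> (S - {p}) (B1 \<union> B2 - {p}) x q else 0)"

definition bracket_eq_single2 :: "('a set \<Rightarrow> 'a \<Rightarrow> 'a set \<Rightarrow> 'm \<Rightarrow> 'm) \<Rightarrow> ('a set \<Rightarrow> 'a set \<Rightarrow> 'm \<Rightarrow> 'm)
    \<Rightarrow> 'a set \<Rightarrow> 'a set \<Rightarrow> 'a set \<Rightarrow> 'm::ab_group_add \<Rightarrow> 'a \<Rightarrow> 'a \<Rightarrow> bool"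
  where "bracket_eq_single2 \<alpha> \<omega> S B1 B2 x p q \<longleftrightarrow>
    decomp_a1a2 \<alpha> \<omega> S B1 B2 x p q - decomp_a1a2 \<alpha> \<omega> S B2 B1 x q p =
    decomp_a_prime \<alpha> \<omega> S B1 B2 x p q - decomp_a_prime \<alpha> \<omega> S B2 B1 x q p"

lemma bracket_eq_single2_swap:
  "bracket_eq_single2 \<alpha> \<omega> S B1 B2 x p q \<longleftrightarrow> bracket_eq_single2 \<alpha> \<omega> S B2 B1 x q p"
  unfolding bracket_eq_single2_def by (metis minus_diff_eq)

lemma bracket_eq_single2_degenerate:
  assumes "B1 \<subseteq> S" "B2 \<subseteq> S" "\<not> (p \<in> S \<and> q \<in> S \<and> p \<noteq> q)"
  shows "bracket_eq_single2 \<alpha> \<omega> S B1 B2 x p q"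
  using assms by (auto simp: bracket_eq_single2_def decomp_a1a2_def decomp_a_prime_def)

lemmas bracket_eq_single2_unfolded =
  bracket_eq_single2_def decomp_a1a2_def decomp_a_prime_def decomp_map_def

context
  fixes \<alpha> :: "'a set \<Rightarrow> 'a \<Rightarrow> 'a set \<Rightarrow> 'm::ab_group_add \<Rightarrow> 'm" and \<omega> :: "'a set \<Rightarrow> 'a set \<Rightarrow> 'm \<Rightarrow> 'm"
    and S B1 B2 :: "'a set" and p q :: 'a
  assumes disjoint: "B1 \<inter> B2 = {}" and pq: "p \<in> S" "q \<in> S" "p \<noteq> q"
begin

lemma bracket_eq_single2_outside_outside:
  assumes "p \<notin> B1 \<union> B2" "q \<notin> B1 \<union> B2"
  shows "bracket_eq_single2 \<alpha> \<omega> S B1 B2 x p q \<longleftrightarrow>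
    \<alpha> (S - {q}) p B1 (\<alpha> (S - B1) q B2 x) = \<alpha> (S - {p}) q B2 (\<alpha> (S - B2) p B1 x)"
  using assms pq by (simp add: bracket_eq_single2_unfolded)

lemma bracket_eq_single2_right_outside:
  assumes "p \<in> B2" "q \<notin> B1 \<union> B2"
  shows "bracket_eq_single2 \<alpha> \<omega> S B1 B2 x p q \<longleftrightarrow>
    \<alpha> (S - {q}) p B1 (\<alpha> (S - B1) q B2 x) = \<alpha> (S - {p}) q (B1 \<union> B2 - {p}) x"
  using assms pq disjoint by (auto simp: bracket_eq_single2_unfolded)

lemma bracket_eq_single2_left_left:
  assumes "p \<in> B1" "q \<in> B1"
  shows "bracket_eq_single2 \<alpha> \<omega> S B1 B2 x p q \<longleftrightarrow>
    \<alpha> (S - {p}) q B2 (\<omega> (S - {p} - B2) (B1 - {p}) x) = \<omega> (S - {p} - {q}) (B2 \<union> (B1 - {p}) - {q}) x"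
proof -
  have "S - B2 - {p} = S - {p} - B2" "S - {q} - {p} = S - {p} - {q}"
    "B2 \<union> B1 - {q} - {p} = B2 \<union> (B1 - {p}) - {q}"
    using assms disjoint by blast+
  then show ?thesis
    using assms pq disjoint by (auto simp: bracket_eq_single2_unfolded)
qed

lemma bracket_eq_single2_left_right:
  assumes "p \<in> B1" "q \<in> B2"
  defines "T \<equiv> S - {p} - {q}"
  shows "bracket_eq_single2 \<alpha> \<omega> S B1 B2 x p q \<longleftrightarrow>
    \<omega> T (B1 - {p}) (\<omega> (T - (B1 - {p})) (B2 - {q}) x) =
    \<omega> T (B2 - {q}) (\<omega> (T - (B2 - {q})) (B1 - {p}) x)"
proof -
  have "S - {q} - {p} = T" "S - B1 - {q} = T - (B1 - {p})" "S - B2 - {p} = T - (B2 - {q})"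
    using assms disjoint by blast+
  then show ?thesis
    using assms pq disjoint by (auto simp: bracket_eq_single2_unfolded)
qed

lemma bracket_eq_single2_right_left:
  assumes "p \<in> B2" "q \<in> B1"
  shows "bracket_eq_single2 \<alpha> \<omega> S B1 B2 x p q"
proof -
  have "S - {q} - {p} = S - {p} - {q}" "B2 \<union> B1 - {q} - {p} = B1 \<union> B2 - {p} - {q}"
    by blast+
  then show ?thesis
    using assms pq disjoint by (auto simp: bracket_eq_single2_unfolded)
qed

lemma bracket_eq_single2_left_outside:
  assumes "p \<in> B1" "q \<notin> B1 \<union> B2"
  shows "bracket_eq_single2 \<alpha> \<omega> S B1 B2 x p q \<longleftrightarrow>
    \<omega> (S - {p} - {q}) (B1 - {p}) (\<alpha> (S - {p} - (B1 - {p})) q B2 x) =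
    \<alpha> (S - {p}) q B2 (\<omega> (S - {p} - B2) (B1 - {p}) x)"
proof -
  have "S - {q} - {p} = S - {p} - {q}" "S - B1 = S - {p} - (B1 - {p})" "S - B2 - {p} = S - {p} - B2"
    using assms by blast+
  then show ?thesis
    using assms pq disjoint by (auto simp: bracket_eq_single2_unfolded)
qed

end

definition alpha_alpha_relation :: "('a set \<Rightarrow> 'm set) \<Rightarrow> ('a set \<Rightarrow> 'a \<Rightarrow> 'a set \<Rightarrow> 'm \<Rightarrow> 'm) \<Rightarrow> bool"
  where "alpha_alpha_relation M \<alpha> \<longleftrightarrow>
    (\<forall>S A B i j x. finite S \<and> A \<subseteq> S \<and> B \<subseteq> S \<and> A \<inter> B = {} \<and> j \<in> B \<and> i \<in> S - (A \<union> B)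
        \<and> x \<in> M (S - (A \<union> B)) \<longrightarrow>
        \<alpha> (S - {i}) j A (\<alpha> (S - A) i B x) = \<alpha> (S - {j}) i ((A \<union> B) - {j}) x)"

definition alpha_omega_relation :: "('a set \<Rightarrow> 'm set) \<Rightarrow> ('a set \<Rightarrow> 'a \<Rightarrow> 'a set \<Rightarrow> 'm \<Rightarrow> 'm)
    \<Rightarrow> ('a set \<Rightarrow> 'a set \<Rightarrow> 'm \<Rightarrow> 'm) \<Rightarrow> bool"
  where "alpha_omega_relation M \<alpha> \<omega> \<longleftrightarrow>
    (\<forall>S A B j x. finite S \<and> A \<subseteq> S \<and> B \<subseteq> S \<and> A \<inter> B = {} \<and> j \<in> B
        \<and> x \<in> M (S - (A \<union> B)) \<longrightarrow>
        \<alpha> S j A (\<omega> (S - A) B x) = \<omega> (S - {j}) ((A \<union> B) - {j}) x)"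

lemma commuteD:
  assumes "commute M P\<phi> \<phi> P\<psi> \<psi>" "finite S" "A \<subseteq> S" "B \<subseteq> S" "C \<subseteq> S" "D \<subseteq> S"
    "A \<inter> B = {}" "A \<inter> C = {}" "A \<inter> D = {}" "B \<inter> C = {}" "B \<inter> D = {}" "C \<inter> D = {}"
    "P\<phi> A" "P\<psi> C" "x \<in> M (S - (B \<union> D))"
  shows "\<psi> (S - A) C D (\<phi> (S - D) A B x) = \<phi> (S - C) A B (\<psi> (S - B) C D x)"
  using assms unfolding commute_def by blast

lemma commute_alpha_alpha_iff:
  "commute M is_singleton (alpha_family \<alpha>) is_singleton (alpha_family \<alpha>) \<longleftrightarrow>
    (\<forall>S i j B D x. finite S \<and> i \<in> S \<and> j \<in> S \<and> i \<noteq> j \<and> B \<subseteq> S \<and> D \<subseteq> S \<and> B \<inter> D = {}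
       \<and> i \<notin> B \<union> D \<and> j \<notin> B \<union> D \<and> x \<in> M (S - (B \<union> D)) \<longrightarrow>
       \<alpha> (S - {i}) j D (\<alpha> (S - D) i B x) = \<alpha> (S - {j}) i B (\<alpha> (S - B) j D x))"
proof (intro iffI allI impI)
  fix S i j B D x
  assume c: "commute M is_singleton (alpha_family \<alpha>) is_singleton (alpha_family \<alpha>)"
    and "finite S \<and> i \<in> S \<and> j \<in> S \<and> i \<noteq> j \<and> B \<subseteq> S \<and> D \<subseteq> S \<and> B \<inter> D = {}
       \<and> i \<notin> B \<union> D \<and> j \<notin> B \<union> D \<and> x \<in> M (S - (B \<union> D))"
  then show "\<alpha> (S - {i}) j D (\<alpha> (S - D) i B x) = \<alpha> (S - {j}) i B (\<alpha> (S - B) j D x)"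
    using commuteD[OF c, of S "{i}" B "{j}" D] by (auto simp: alpha_family_def)
qed (clarsimp simp: commute_def alpha_family_def is_singleton_def, metis)

lemma commute_omega_omega_iff:
  "commute M (\<lambda>A. A = {}) (omega_family \<omega>) (\<lambda>A. A = {}) (omega_family \<omega>) \<longleftrightarrow>
    (\<forall>S B D x. finite S \<and> B \<subseteq> S \<and> D \<subseteq> S \<and> B \<inter> D = {} \<and> x \<in> M (S - (B \<union> D)) \<longrightarrow>
       \<omega> S D (\<omega> (S - D) B x) = \<omega> S B (\<omega> (S - B) D x))"
proof (intro iffI allI impI)
  fix S B D x
  assume c: "commute M (\<lambda>A. A = {}) (omega_family \<omega>) (\<lambda>A. A = {}) (omega_family \<omega>)"
    and "finite S \<and> B \<subseteq> S \<and> D \<subseteq> S \<and> B \<inter> D = {} \<and> x \<in> M (S - (B \<union> D))"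
  then show "\<omega> S D (\<omega> (S - D) B x) = \<omega> S B (\<omega> (S - B) D x)"
    using commuteD[OF c, of S "{}" B "{}" D] by (auto simp: omega_family_def)
qed (auto simp: commute_def omega_family_def)

lemma commute_alpha_omega_iff:
  "commute M is_singleton (alpha_family \<alpha>) (\<lambda>A. A = {}) (omega_family \<omega>) \<longleftrightarrow>
    (\<forall>S i B D x. finite S \<and> i \<in> S \<and> B \<subseteq> S \<and> D \<subseteq> S \<and> B \<inter> D = {} \<and> i \<notin> B \<union> D
       \<and> x \<in> M (S - (B \<union> D)) \<longrightarrow>
       \<omega> (S - {i}) D (\<alpha> (S - D) i B x) = \<alpha> S i B (\<omega> (S - B) D x))"
proof (intro iffI allI impI)
  fix S i B D x
  assume c: "commute M is_singleton (alpha_family \<alpha>) (\<lambda>A. A = {}) (omega_family \<omega>)"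
    and "finite S \<and> i \<in> S \<and> B \<subseteq> S \<and> D \<subseteq> S \<and> B \<inter> D = {} \<and> i \<notin> B \<union> D
       \<and> x \<in> M (S - (B \<union> D))"
  then show "\<omega> (S - {i}) D (\<alpha> (S - D) i B x) = \<alpha> S i B (\<omega> (S - B) D x)"
    using commuteD[OF c, of S "{i}" B "{}" D] by (auto simp: alpha_family_def omega_family_def)
qed (auto simp: commute_def alpha_family_def omega_family_def is_singleton_def)

context
  fixes M :: "'a set \<Rightarrow> 'm::ab_group_add set"
    and \<alpha> :: "'a set \<Rightarrow> 'a \<Rightarrow> 'a set \<Rightarrow> 'm \<Rightarrow> 'm" and \<omega> :: "'a set \<Rightarrow> 'a set \<Rightarrow> 'm \<Rightarrow> 'm"
  assumes alpha_alpha: "commute M is_singleton (alpha_family \<alpha>) is_singleton (alpha_family \<alpha>)"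
    and omega_omega: "commute M (\<lambda>A. A = {}) (omega_family \<omega>) (\<lambda>A. A = {}) (omega_family \<omega>)"
    and alpha_omega: "commute M is_singleton (alpha_family \<alpha>) (\<lambda>A. A = {}) (omega_family \<omega>)"
    and alpha_alpha_rel: "alpha_alpha_relation M \<alpha>"
    and alpha_omega_rel: "alpha_omega_relation M \<alpha> \<omega>"
begin

lemma bracket_eq_single2_unmirrored_if_relations:
  assumes S: "finite S" "B1 \<subseteq> S" "B2 \<subseteq> S" and disj: "B1 \<inter> B2 = {}" and x: "x \<in> M (S - B1 - B2)"
    and pq: "p \<in> S" "q \<in> S" "p \<noteq> q"
    and unmirrored: "\<not> (p \<in> B2 \<and> q \<in> B2)" "\<not> (p \<notin> B1 \<union> B2 \<and> q \<in> B2)"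
      "\<not> (p \<notin> B1 \<union> B2 \<and> q \<in> B1)"
  shows "bracket_eq_single2 \<alpha> \<omega> S B1 B2 x p q"
proof -
  note alpha_alpha' = alpha_alpha[unfolded commute_alpha_alpha_iff, rule_format]
  note omega_omega' = omega_omega[unfolded commute_omega_omega_iff, rule_format]
  note alpha_omega' = alpha_omega[unfolded commute_alpha_omega_iff, rule_format]
  note alpha_alpha_rel' = alpha_alpha_rel[unfolded alpha_alpha_relation_def, rule_format]
  note alpha_omega_rel' = alpha_omega_rel[unfolded alpha_omega_relation_def, rule_format]
  have xM: "x \<in> M T" if "T = S - B1 - B2" for T
    using x that by simp
  consider "p \<in> B1" "q \<in> B1" | "p \<in> B1" "q \<in> B2" | "p \<in> B2" "q \<in> B1"
    | "p \<in> B1" "q \<notin> B1 \<union> B2" | "p \<in> B2" "q \<notin> B1 \<union> B2" | "p \<notin> B1 \<union> B2" "q \<notin> B1 \<union> B2"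
    using unmirrored by blast
  then show ?thesis
  proof cases
    case 1
    show ?thesis
      unfolding bracket_eq_single2_left_left[OF disj pq 1]
      by (rule alpha_omega_rel') (use S disj pq 1 in \<open>auto intro!: xM\<close>)
  next
    case 2
    show ?thesis
      unfolding bracket_eq_single2_left_right[OF disj pq 2]
      by (rule omega_omega') (use S disj pq 2 in \<open>auto intro!: xM\<close>)
  next
    case 3
    then show ?thesis
      by (rule bracket_eq_single2_right_left[OF disj pq])
  next
    case 4
    show ?thesis
      unfolding bracket_eq_single2_left_outside[OF disj pq 4]
      by (rule alpha_omega') (use S disj pq 4 in \<open>auto intro!: xM\<close>)
  next
    case 5
    show ?thesis
      unfolding bracket_eq_single2_right_outside[OF disj pq 5]
      by (rule alpha_alpha_rel') (use S disj pq 5 in \<open>auto intro!: xM\<close>)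
  next
    case 6
    show ?thesis
      unfolding bracket_eq_single2_outside_outside[OF disj pq 6]
      by (rule alpha_alpha') (use S disj pq 6 in \<open>auto intro!: xM\<close>)
  qed
qed

lemma bracket_eq_single2_if_relations:
  assumes S: "finite S" "B1 \<subseteq> S" "B2 \<subseteq> S" "B1 \<inter> B2 = {}" and x: "x \<in> M (S - B1 - B2)"
  shows "bracket_eq_single2 \<alpha> \<omega> S B1 B2 x p q"
proof (cases "p \<in> S \<and> q \<in> S \<and> p \<noteq> q")
  case True
  then have pq: "p \<in> S" "q \<in> S" "p \<noteq> q"
    by auto
  show ?thesis
  proof (cases "(p \<in> B2 \<and> q \<in> B2) \<or> (p \<notin> B1 \<union> B2 \<and> q \<in> B2) \<or> (p \<notin> B1 \<union> B2 \<and> q \<in> B1)")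
    case True
    have "S - B2 - B1 = S - B1 - B2"
      by blast
    with x have "x \<in> M (S - B2 - B1)"
      by simp
    with True S pq have "bracket_eq_single2 \<alpha> \<omega> S B2 B1 x q p"
      by (intro bracket_eq_single2_unmirrored_if_relations) auto
    then show ?thesis
      by (simp add: bracket_eq_single2_swap)
  next
    case False
    with S x pq show ?thesis
      by (intro bracket_eq_single2_unmirrored_if_relations) auto
  qed
qed (use S in \<open>simp add: bracket_eq_single2_degenerate\<close>)

end

context
  fixes M :: "'a set \<Rightarrow> 'm::ab_group_add set"
    and \<alpha> :: "'a set \<Rightarrow> 'a \<Rightarrow> 'a set \<Rightarrow> 'm \<Rightarrow> 'm" and \<omega> :: "'a set \<Rightarrow> 'a set \<Rightarrow> 'm \<Rightarrow> 'm"
  assumes bracket_eq: "\<And>S B1 B2 x p q. finite S \<Longrightarrow> B1 \<subseteq> S \<Longrightarrow> B2 \<subseteq> S \<Longrightarrow> B1 \<inter> B2 = {} \<Longrightarrow>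
    x \<in> M (S - B1 - B2) \<Longrightarrow> bracket_eq_single2 \<alpha> \<omega> S B1 B2 x p q"
begin

lemma commute_alpha_alpha_if_bracket_eq:
  "commute M is_singleton (alpha_family \<alpha>) is_singleton (alpha_family \<alpha>)"
  unfolding commute_alpha_alpha_iff
proof (intro allI impI, elim conjE)
  fix S i j B D x
  assume S: "finite S" "i \<in> S" "j \<in> S" "i \<noteq> j" "B \<subseteq> S" "D \<subseteq> S" "B \<inter> D = {}"
    "i \<notin> B \<union> D" "j \<notin> B \<union> D" and x: "x \<in> M (S - (B \<union> D))"
  have "S - D - B = S - (B \<union> D)"
    by blast
  with S x have "bracket_eq_single2 \<alpha> \<omega> S D B x j i"
    by (intro bracket_eq) auto
  with S show "\<alpha> (S - {i}) j D (\<alpha> (S - D) i B x) = \<alpha> (S - {j}) i B (\<alpha> (S - B) j D x)"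
    by (subst (asm) bracket_eq_single2_outside_outside) auto
qed

lemma alpha_alpha_relation_if_bracket_eq: "alpha_alpha_relation M \<alpha>"
  unfolding alpha_alpha_relation_def
proof (intro allI impI, elim conjE)
  fix S A B i j x
  assume S: "finite S" "A \<subseteq> S" "B \<subseteq> S" "A \<inter> B = {}" "j \<in> B" "i \<in> S - (A \<union> B)"
    and x: "x \<in> M (S - (A \<union> B))"
  have "S - A - B = S - (A \<union> B)"
    by blast
  with S x have "bracket_eq_single2 \<alpha> \<omega> S A B x j i"
    by (intro bracket_eq) auto
  with S show "\<alpha> (S - {i}) j A (\<alpha> (S - A) i B x) = \<alpha> (S - {j}) i (A \<union> B - {j}) x"
    by (subst (asm) bracket_eq_single2_right_outside) auto
qed

lemma commute_omega_omega_if_bracket_eq: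
  assumes labels: "infinite (UNIV :: 'a set)"
  shows "commute M (\<lambda>A. A = {}) (omega_family \<omega>) (\<lambda>A. A = {}) (omega_family \<omega>)"
  unfolding commute_omega_omega_iff
proof (intro allI impI, elim conjE)
  fix S B D x
  assume S: "finite S" "B \<subseteq> S" "D \<subseteq> S" "B \<inter> D = {}" and x: "x \<in> M (S - (B \<union> D))"
  obtain p where p: "p \<notin> S"
    using ex_new_if_finite[OF labels S(1)] by blast
  obtain q where q: "q \<notin> insert p S"
    using ex_new_if_finite[OF labels, of "insert p S"] S(1) by blast
  define S' where "S' = insert p (insert q S)"
  have sets: "S' - insert p D - insert q B = S - (B \<union> D)" "S' - {p} - {q} = S"
    "insert p D - {p} = D" "insert q B - {q} = B"
    using S p q unfolding S'_def by auto
  with S p q x have "bracket_eq_single2 \<alpha> \<omega> S' (insert p D) (insert q B) x p q"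
    by (intro bracket_eq) (auto simp: S'_def)
  with S p q show "\<omega> S D (\<omega> (S - D) B x) = \<omega> S B (\<omega> (S - B) D x)"
    by (subst (asm) bracket_eq_single2_left_right) (auto simp: S'_def sets)
qed

lemma commute_alpha_omega_if_bracket_eq:
  assumes labels: "infinite (UNIV :: 'a set)"
  shows "commute M is_singleton (alpha_family \<alpha>) (\<lambda>A. A = {}) (omega_family \<omega>)"
  unfolding commute_alpha_omega_iff
proof (intro allI impI, elim conjE)
  fix S i B D x
  assume S: "finite S" "i \<in> S" "B \<subseteq> S" "D \<subseteq> S" "B \<inter> D = {}" "i \<notin> B \<union> D"
    and x: "x \<in> M (S - (B \<union> D))"
  obtain p where p: "p \<notin> S"
    using ex_new_if_finite[OF labels S(1)] by blast
  define S' where "S' = insert p S"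
  have sets: "S' - insert p D - B = S - (B \<union> D)" "S' - {p} = S" "insert p D - {p} = D"
    using S p unfolding S'_def by auto
  with S p x have "bracket_eq_single2 \<alpha> \<omega> S' (insert p D) B x p i"
    by (intro bracket_eq) (auto simp: S'_def)
  with S p show "\<omega> (S - {i}) D (\<alpha> (S - D) i B x) = \<alpha> S i B (\<omega> (S - B) D x)"
    by (subst (asm) bracket_eq_single2_left_outside) (auto simp: S'_def sets)
qed

lemma alpha_omega_relation_if_bracket_eq:
  assumes labels: "infinite (UNIV :: 'a set)"
  shows "alpha_omega_relation M \<alpha> \<omega>"
  unfolding alpha_omega_relation_def
proof (intro allI impI, elim conjE)
  fix S A B j x
  assume S: "finite S" "A \<subseteq> S" "B \<subseteq> S" "A \<inter> B = {}" "j \<in> B" and x: "x \<in> M (S - (A \<union> B))"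
  obtain p where p: "p \<notin> S"
    using ex_new_if_finite[OF labels S(1)] by blast
  define S' where "S' = insert p S"
  have sets: "S' - insert p B - A = S - (A \<union> B)" "S' - {p} = S" "insert p B - {p} = B"
    using S p unfolding S'_def by auto
  with S p x have "bracket_eq_single2 \<alpha> \<omega> S' (insert p B) A x p j"
    by (intro bracket_eq) (auto simp: S'_def)
  with S p show "\<alpha> S j A (\<omega> (S - A) B x) = \<omega> (S - {j}) (A \<union> B - {j}) x"
    by (subst (asm) bracket_eq_single2_left_left) (auto simp: S'_def sets)
qed

end

lemma bracket_eq_single2_iff_relations:
  fixes M :: "'a set \<Rightarrow> 'm::ab_group_add set"
  assumes labels: "infinite (UNIV :: 'a set)"
  shows "(\<forall>S B1 B2 x p q. finite S \<and> B1 \<subseteq> S \<and> B2 \<subseteq> S \<and> B1 \<inter> B2 = {} \<and> x \<in> M (S - B1 - B2) \<longrightarrow>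
      bracket_eq_single2 \<alpha> \<omega> S B1 B2 x p q) \<longleftrightarrow>
    commute M is_singleton (alpha_family \<alpha>) is_singleton (alpha_family \<alpha>) \<and>
    commute M (\<lambda>A. A = {}) (omega_family \<omega>) (\<lambda>A. A = {}) (omega_family \<omega>) \<and>
    commute M is_singleton (alpha_family \<alpha>) (\<lambda>A. A = {}) (omega_family \<omega>) \<and>
    alpha_alpha_relation M \<alpha> \<and> alpha_omega_relation M \<alpha> \<omega>"
    (is "?generators \<longleftrightarrow> ?relations")
proof
  assume ?generators
  then have generators: "\<And>S B1 B2 x p q. finite S \<Longrightarrow> B1 \<subseteq> S \<Longrightarrow> B2 \<subseteq> S \<Longrightarrow> B1 \<inter> B2 = {} \<Longrightarrow>
      x \<in> M (S - B1 - B2) \<Longrightarrow> bracket_eq_single2 \<alpha> \<omega> S B1 B2 x p q"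
    by blast
  show ?relations
    using commute_alpha_alpha_if_bracket_eq[OF generators]
      commute_omega_omega_if_bracket_eq[OF generators labels]
      commute_alpha_omega_if_bracket_eq[OF generators labels]
      alpha_alpha_relation_if_bracket_eq[OF generators]
      alpha_omega_relation_if_bracket_eq[OF generators labels]
    by blast
qed (blast intro: bracket_eq_single2_if_relations)

definition single2 :: "'a set \<Rightarrow> 'a set \<Rightarrow> 'm::zero \<Rightarrow> 'a set \<Rightarrow> 'a set \<Rightarrow> 'm"
  where "single2 B1 B2 x = (\<lambda>C1 C2. if C1 = B1 \<and> C2 = B2 then x else 0)"

lemma single_zero: "single B 0 = (\<lambda>_. 0)"
  by (simp add: single_def fun_eq_iff)

lemma tau_single2: "tau (single2 B1 B2 x) = single2 B2 B1 x"
  by (auto simp: tau_def single2_def fun_eq_iff)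

lemma a2a1_eq_a1a2_tau: "a2a1 a S h p q = a1a2 a S (tau h) q p"
  by (simp add: a1a2_def a2a1_def tau_def)

lemma a_dprime_eq_a_prime_tau: "a_dprime a S h p q = a_prime a S (tau h) q p"
  by (simp add: a_dprime_def tau_def)

lemma idV_m_idDelta_eq:
  "idV_m (tau (idDelta h)) i B = (\<Sum>B1\<in>Pow B. if i \<notin> B - B1 then h B1 (insert i (B - B1)) else 0)"
  by (simp add: idV_m_def tau_def idDelta_def)

lemma SymMI:
  "(\<And>B. B \<subseteq> S \<Longrightarrow> f B \<in> M (S - B)) \<Longrightarrow> (\<And>B. \<not> B \<subseteq> S \<Longrightarrow> f B = 0) \<Longrightarrow> f \<in> SymM M S"
  unfolding SymM_def by auto

lemma SymSymMI:
  "(\<And>B1 B2. B1 \<subseteq> S \<Longrightarrow> B2 \<subseteq> S \<Longrightarrow> B1 \<inter> B2 = {} \<Longrightarrow> h B1 B2 \<in> M (S - B1 - B2)) \<Longrightarrow>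
   (\<And>B1 B2. \<not> (B1 \<subseteq> S \<and> B2 \<subseteq> S \<and> B1 \<inter> B2 = {}) \<Longrightarrow> h B1 B2 = 0) \<Longrightarrow> h \<in> SymSymM M S"
  unfolding SymSymM_def by auto

lemma SymSymM_mem:
  "h \<in> SymSymM M S \<Longrightarrow> B1 \<subseteq> S \<Longrightarrow> B2 \<subseteq> S \<Longrightarrow> B1 \<inter> B2 = {} \<Longrightarrow> h B1 B2 \<in> M (S - B1 - B2)"
  unfolding SymSymM_def by simp

lemma SymSymM_zero:
  "h \<in> SymSymM M S \<Longrightarrow> \<not> (B1 \<subseteq> S \<and> B2 \<subseteq> S \<and> B1 \<inter> B2 = {}) \<Longrightarrow> h B1 B2 = 0"
  unfolding SymSymM_def by simp

lemma SymSymM_row: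
  assumes h: "h \<in> SymSymM M S" and B: "B \<subseteq> S"
  shows "h B \<in> SymM M (S - B)"
proof (rule SymMI)
  fix C
  show "C \<subseteq> S - B \<Longrightarrow> h B C \<in> M (S - B - C)"
    using SymSymM_mem[OF h B] by blast
  show "\<not> C \<subseteq> S - B \<Longrightarrow> h B C = 0"
    by (rule SymSymM_zero[OF h]) blast
qed

lemma tau_SymSymM:
  assumes h: "h \<in> SymSymM M S"
  shows "tau h \<in> SymSymM M S"
proof (rule SymSymMI)
  fix B1 B2
  assume "B1 \<subseteq> S" "B2 \<subseteq> S" "B1 \<inter> B2 = {}"
  moreover have "S - B2 - B1 = S - B1 - B2"
    by blast
  ultimately show "tau h B1 B2 \<in> M (S - B1 - B2)"
    using SymSymM_mem[OF h, of B2 B1] by (simp add: tau_def Int_commute)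
next
  fix B1 B2
  assume "\<not> (B1 \<subseteq> S \<and> B2 \<subseteq> S \<and> B1 \<inter> B2 = {})"
  then show "tau h B1 B2 = 0"
    using SymSymM_zero[OF h, of B2 B1] by (auto simp: tau_def)
qed

(* Only additivity of a and of the M(T) is used. *)
locale decomposed_map =
  fixes M :: "'a set \<Rightarrow> 'm::ab_group_add set"
    and a :: "'a set \<Rightarrow> ('a set \<Rightarrow> 'm) \<Rightarrow> 'a \<Rightarrow> 'm"
    and \<alpha> :: "'a set \<Rightarrow> 'a \<Rightarrow> 'a set \<Rightarrow> 'm \<Rightarrow> 'm"
    and \<omega> :: "'a set \<Rightarrow> 'a set \<Rightarrow> 'm \<Rightarrow> 'm"
  assumes zero_mem: "finite T \<Longrightarrow> 0 \<in> M T"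
    and add_mem: "finite T \<Longrightarrow> x \<in> M T \<Longrightarrow> y \<in> M T \<Longrightarrow> x + y \<in> M T"
    and a_mem: "finite S \<Longrightarrow> f \<in> SymM M S \<Longrightarrow> a S f \<in> VM M S"
    and a_add: "finite S \<Longrightarrow> f \<in> SymM M S \<Longrightarrow> g \<in> SymM M S \<Longrightarrow>
      a S (\<lambda>B. f B + g B) = (\<lambda>i. a S f i + a S g i)"
    and a_single: "finite S \<Longrightarrow> B \<subseteq> S \<Longrightarrow> x \<in> M (S - B) \<Longrightarrow> a S (single B x) = decomp_map \<alpha> \<omega> S B x"
begin

lemma zero_SymM: "finite S \<Longrightarrow> (\<lambda>_. 0) \<in> SymM M S"
  by (auto simp: SymM_def zero_mem)

lemma a_zero: "finite S \<Longrightarrow> a S (\<lambda>_. 0) = (\<lambda>_. 0)"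
  using a_add[OF _ zero_SymM zero_SymM] by (simp add: fun_eq_iff)

lemma single_SymM: "finite S \<Longrightarrow> B \<subseteq> S \<Longrightarrow> x \<in> M (S - B) \<Longrightarrow> single B x \<in> SymM M S"
  by (rule SymMI) (auto simp: single_def zero_mem)

lemma sum_mem: "finite T \<Longrightarrow> (\<And>x. x \<in> X \<Longrightarrow> f x \<in> M T) \<Longrightarrow> sum f X \<in> M T"
  by (induct X rule: infinite_finite_induct) (simp_all add: zero_mem add_mem)

lemma add_SymSymM:
  "finite S \<Longrightarrow> h \<in> SymSymM M S \<Longrightarrow> h' \<in> SymSymM M S \<Longrightarrow> (\<lambda>B1 B2. h B1 B2 + h' B1 B2) \<in> SymSymM M S"
  by (rule SymSymMI) (simp_all add: SymSymM_mem SymSymM_zero add_mem)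

lemma single2_SymSymM:
  "finite S \<Longrightarrow> B1 \<subseteq> S \<Longrightarrow> B2 \<subseteq> S \<Longrightarrow> B1 \<inter> B2 = {} \<Longrightarrow> x \<in> M (S - B1 - B2) \<Longrightarrow>
    single2 B1 B2 x \<in> SymSymM M S"
  by (rule SymSymMI) (auto simp: single2_def zero_mem)

lemma SymSymM_induct [consumes 2, case_names single2 add]:
  assumes S: "finite S" and h: "h \<in> SymSymM M S"
    and single2: "\<And>B1 B2 x. B1 \<subseteq> S \<Longrightarrow> B2 \<subseteq> S \<Longrightarrow> B1 \<inter> B2 = {} \<Longrightarrow> x \<in> M (S - B1 - B2) \<Longrightarrow>
      P (single2 B1 B2 x)"
    and add: "\<And>h h'. h \<in> SymSymM M S \<Longrightarrow> h' \<in> SymSymM M S \<Longrightarrow> P h \<Longrightarrow> P h' \<Longrightarrow>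
      P (\<lambda>B1 B2. h B1 B2 + h' B1 B2)"
  shows "P h"
proof -
  define X where "X = {(B1, B2). B1 \<subseteq> S \<and> B2 \<subseteq> S \<and> B1 \<inter> B2 = {}}"
  define restr where "restr Y = (\<lambda>C1 C2. if (C1, C2) \<in> Y then h C1 C2 else 0)" for Y
  have "finite X"
    using S by (intro finite_subset[of X "Pow S \<times> Pow S"]) (auto simp: X_def)
  moreover have "restr Y \<in> SymSymM M S \<and> P (restr Y)" if "finite Y" "Y \<subseteq> X" for Y
    using that
  proof (induction Y rule: finite_subset_induct)
    case empty
    have "restr {} = single2 {} {} 0"
      by (simp add: restr_def single2_def fun_eq_iff)
    then show ?case
      using S by (simp add: single2 single2_SymSymM zero_mem)
  next
    case (insert y Y)
    obtain B1 B2 where y: "y = (B1, B2)" and B: "B1 \<subseteq> S" "B2 \<subseteq> S" "B1 \<inter> B2 = {}"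
      using insert.hyps(2) by (auto simp: X_def)
    have hy: "h B1 B2 \<in> M (S - B1 - B2)"
      using SymSymM_mem[OF h B] .
    have "restr (insert y Y) = (\<lambda>C1 C2. restr Y C1 C2 + single2 B1 B2 (h B1 B2) C1 C2)"
      using insert.hyps(3) y by (auto simp: restr_def single2_def fun_eq_iff)
    then show ?case
      using insert.IH S B hy by (simp add: add add_SymSymM single2 single2_SymSymM)
  qed
  moreover have "restr X = h"
    using SymSymM_zero[OF h] by (auto simp: restr_def X_def fun_eq_iff)
  ultimately show ?thesis
    by (metis order_refl)
qed

lemma idV_a_add:
  assumes S: "finite S"
    and q: "\<And>i. i \<in> S \<Longrightarrow> q i \<in> SymM M (S - {i})" and q': "\<And>i. i \<in> S \<Longrightarrow> q' i \<in> SymM M (S - {i})"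
  shows "idV_a a S (\<lambda>i B. q i B + q' i B) i j = idV_a a S q i j + idV_a a S q' i j"
  using a_add[OF _ q q'] S by (simp add: idV_a_def)

lemma idSym_a_add:
  assumes S: "finite S" and h: "h \<in> SymSymM M S" and h': "h' \<in> SymSymM M S"
  shows "idSym_a a S (\<lambda>B1 B2. h B1 B2 + h' B1 B2) B i = idSym_a a S h B i + idSym_a a S h' B i"
  using a_add[OF _ SymSymM_row[OF h] SymSymM_row[OF h']] S by (simp add: idSym_a_def)

lemma idSym_a_column:
  assumes S: "finite S" and h: "h \<in> SymSymM M S"
  shows "(\<lambda>B. idSym_a a S h B i) \<in> SymM M (S - {i})"
proof (rule SymMI)
  fix B
  assume B: "B \<subseteq> S - {i}"
  show "idSym_a a S h B i \<in> M (S - {i} - B)"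
  proof (cases "i \<in> S")
    case True
    have "a (S - B) (h B) \<in> VM M (S - B)"
      using S B by (intro a_mem SymSymM_row[OF h]) auto
    then have "a (S - B) (h B) i \<in> M (S - B - {i})"
      using True B by (auto simp: VM_def)
    moreover have "S - B - {i} = S - {i} - B"
      by blast
    ultimately show ?thesis
      using True B by (auto simp: idSym_a_def)
  qed (use S in \<open>simp add: idSym_a_def zero_mem\<close>)
qed (auto simp: idSym_a_def)

lemma idV_m_idDelta_column:
  assumes S: "finite S" and h: "h \<in> SymSymM M S"
  shows "idV_m (tau (idDelta h)) i \<in> SymM M (S - {i})"
proof (rule SymMI)
  fix B
  assume B: "B \<subseteq> S - {i}"
  have "(if i \<notin> B - B1 then h B1 (insert i (B - B1)) else 0) \<in> M (S - {i} - B)"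
    if B1: "B1 \<subseteq> B" for B1
  proof (cases "i \<in> S")
    case True
    have "S - B1 - insert i (B - B1) = S - {i} - B"
      using B1 by blast
    then show ?thesis
      using SymSymM_mem[OF h, of B1 "insert i (B - B1)"] B B1 True by auto
  qed (use S SymSymM_zero[OF h] zero_mem in auto)
  then show "idV_m (tau (idDelta h)) i B \<in> M (S - {i} - B)"
    unfolding idV_m_idDelta_eq using S by (intro sum_mem) auto
next
  fix B
  assume B: "\<not> B \<subseteq> S - {i}"
  have "h B1 (insert i (B - B1)) = 0" if "B1 \<subseteq> B" "i \<notin> B - B1" for B1
    using B that by (intro SymSymM_zero[OF h]) blast
  then show "idV_m (tau (idDelta h)) i B = 0"
    unfolding idV_m_idDelta_eq by (intro sum.neutral) auto
qed

lemma a1a2_add: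
  assumes S: "finite S" and h: "h \<in> SymSymM M S" and h': "h' \<in> SymSymM M S"
  shows "a1a2 a S (\<lambda>B1 B2. h B1 B2 + h' B1 B2) p q = a1a2 a S h p q + a1a2 a S h' p q"
proof -
  have "tau (idSym_a a S (\<lambda>B1 B2. h B1 B2 + h' B1 B2)) =
      (\<lambda>i B. tau (idSym_a a S h) i B + tau (idSym_a a S h') i B)"
    using idSym_a_add[OF S h h'] by (simp add: tau_def fun_eq_iff)
  moreover have "\<And>i. tau (idSym_a a S h) i \<in> SymM M (S - {i})"
    "\<And>i. tau (idSym_a a S h') i \<in> SymM M (S - {i})"
    using idSym_a_column[OF S h] idSym_a_column[OF S h'] by (simp_all add: tau_def)
  ultimately show ?thesis
    unfolding a1a2_def using idV_a_add[OF S] by (simp add: tau_def)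
qed

lemma a_prime_add:
  assumes S: "finite S" and h: "h \<in> SymSymM M S" and h': "h' \<in> SymSymM M S"
  shows "a_prime a S (\<lambda>B1 B2. h B1 B2 + h' B1 B2) p q = a_prime a S h p q + a_prime a S h' p q"
proof -
  have "idV_m (tau (idDelta (\<lambda>B1 B2. h B1 B2 + h' B1 B2))) =
      (\<lambda>i B. idV_m (tau (idDelta h)) i B + idV_m (tau (idDelta h')) i B)"
    unfolding idV_m_idDelta_eq by (auto simp: sum.distrib[symmetric] fun_eq_iff intro!: sum.cong)
  then show ?thesis
    unfolding a_prime_def
    using idV_a_add[OF S idV_m_idDelta_column[OF S h] idV_m_idDelta_column[OF S h']] by simp
qed

lemma decomp_map_mem:
  assumes "finite S" "B \<subseteq> S" "x \<in> M (S - B)" "i \<in> S"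
  shows "decomp_map \<alpha> \<omega> S B x i \<in> M (S - {i})"
  using a_mem[OF _ single_SymM] a_single assms by (fastforce simp: VM_def)

lemma a1a2_single2:
  assumes S: "finite S" "B1 \<subseteq> S" "B2 \<subseteq> S" "B1 \<inter> B2 = {}" and x: "x \<in> M (S - B1 - B2)"
  shows "a1a2 a S (single2 B1 B2 x) p q = decomp_a1a2 \<alpha> \<omega> S B1 B2 x p q"
proof -
  define y where "y = (if q \<in> S - B1 then decomp_map \<alpha> \<omega> (S - B1) B2 x q else 0)"
  have B2: "B2 \<subseteq> S - B1"
    using S by blast
  have column: "(\<lambda>B. idSym_a a S (single2 B1 B2 x) B q) = single B1 y"
  proof
    fix B
    have "single2 B1 B2 x B = (if B = B1 then single B2 x else (\<lambda>_. 0))"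
      by (auto simp: single2_def single_def)
    then show "idSym_a a S (single2 B1 B2 x) B q = single B1 y B"
      using S a_single[OF _ B2 x] a_zero[of "S - B"] by (auto simp: idSym_a_def single_def y_def)
  qed
  show ?thesis
  proof (cases "q \<in> S \<and> p \<in> S - {q} \<and> q \<notin> B1")
    case True
    have "y \<in> M (S - B1 - {q})"
      using decomp_map_mem[OF _ B2 x, of q] S True by (simp add: y_def)
    moreover have "S - B1 - {q} = S - {q} - B1"
      by blast
    moreover have "B1 \<subseteq> S - {q}"
      using True S by blast
    ultimately have "a (S - {q}) (single B1 y) p = decomp_map \<alpha> \<omega> (S - {q}) B1 y p"
      using a_single S by simp
    then show ?thesis
      using True column by (simp add: a1a2_def idV_a_def tau_def decomp_a1a2_def y_def)
  next
    case False
    then show ?thesis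
      using column S a_zero[of "S - {q}"]
      by (auto simp: a1a2_def idV_a_def tau_def decomp_a1a2_def y_def single_zero)
  qed
qed

lemma idV_m_idDelta_single2:
  assumes S: "finite S" "B1 \<subseteq> S" "B2 \<subseteq> S" "B1 \<inter> B2 = {}"
  shows "idV_m (tau (idDelta (single2 B1 B2 x))) p =
    (if p \<in> B2 then single (B1 \<union> B2 - {p}) x else (\<lambda>_. 0))"
proof
  fix B
  have "idV_m (tau (idDelta (single2 B1 B2 x))) p B =
      (\<Sum>C\<in>Pow B. if C = B1 then (if p \<notin> B - B1 \<and> insert p (B - B1) = B2 then x else 0) else 0)"
    unfolding idV_m_idDelta_eq by (rule sum.cong) (auto simp: single2_def)
  also have "\<dots> = (if B1 \<subseteq> B \<and> p \<notin> B - B1 \<and> insert p (B - B1) = B2 \<and> finite B then x else 0)"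
    by (cases "finite B") (auto simp: sum.delta')
  also have "\<dots> = (if p \<in> B2 then single (B1 \<union> B2 - {p}) x else (\<lambda>_. 0)) B"
    using S finite_subset[of B2 S] finite_subset[of B1 S] by (auto simp: single_def)
  finally show "idV_m (tau (idDelta (single2 B1 B2 x))) p B =
      (if p \<in> B2 then single (B1 \<union> B2 - {p}) x else (\<lambda>_. 0)) B" .
qed

lemma a_prime_single2:
  assumes S: "finite S" "B1 \<subseteq> S" "B2 \<subseteq> S" "B1 \<inter> B2 = {}" and x: "x \<in> M (S - B1 - B2)"
  shows "a_prime a S (single2 B1 B2 x) p q = decomp_a_prime \<alpha> \<omega> S B1 B2 x p q"
proof (cases "p \<in> B2 \<and> q \<in> S - {p}")
  case True
  have "B1 \<union> B2 - {p} \<subseteq> S - {p}" "S - {p} - (B1 \<union> B2 - {p}) = S - B1 - B2"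
    using S True by blast+
  then have "a (S - {p}) (single (B1 \<union> B2 - {p}) x) = decomp_map \<alpha> \<omega> (S - {p}) (B1 \<union> B2 - {p}) x"
    using S x by (simp add: a_single)
  then show ?thesis
    using True S by (auto simp: a_prime_def idV_a_def idV_m_idDelta_single2 decomp_a_prime_def)
next
  case False
  then show ?thesis
    using S a_zero[of "S - {p}"]
    by (auto simp: a_prime_def idV_a_def idV_m_idDelta_single2 decomp_a_prime_def)
qed

definition bracket_identity :: "'a set \<Rightarrow> ('a set \<Rightarrow> 'a set \<Rightarrow> 'm) \<Rightarrow> bool"
  where "bracket_identity S h \<longleftrightarrow>
    (\<forall>p q. a1a2 a S h p q - a2a1 a S h p q = a_prime a S h p q - a_dprime a S h p q)"

lemma is_W_rep_iff_bracket_identity: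
  "is_W_rep M a \<longleftrightarrow> (\<forall>S. finite S \<longrightarrow> (\<forall>h\<in>SymSymM M S. bracket_identity S h))"
  by (simp add: is_W_rep_def bracket_identity_def)

lemma bracket_identity_add:
  assumes S: "finite S" and h: "h \<in> SymSymM M S" and h': "h' \<in> SymSymM M S"
    and "bracket_identity S h" "bracket_identity S h'"
  shows "bracket_identity S (\<lambda>B1 B2. h B1 B2 + h' B1 B2)"
proof -
  have tau_add: "tau (\<lambda>B1 B2. h B1 B2 + h' B1 B2) = (\<lambda>B1 B2. tau h B1 B2 + tau h' B1 B2)"
    by (simp add: tau_def)
  note additive = a1a2_add[OF S h h'] a_prime_add[OF S h h']
    a1a2_add[OF S tau_SymSymM[OF h] tau_SymSymM[OF h']]
    a_prime_add[OF S tau_SymSymM[OF h] tau_SymSymM[OF h']]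
  show ?thesis
    using assms(4,5)
    unfolding bracket_identity_def a2a1_eq_a1a2_tau a_dprime_eq_a_prime_tau tau_add additive
    by (simp add: algebra_simps)
qed

lemma bracket_identity_single2_iff:
  assumes S: "finite S" "B1 \<subseteq> S" "B2 \<subseteq> S" "B1 \<inter> B2 = {}" and x: "x \<in> M (S - B1 - B2)"
  shows "bracket_identity S (single2 B1 B2 x) \<longleftrightarrow> (\<forall>p q. bracket_eq_single2 \<alpha> \<omega> S B1 B2 x p q)"
proof -
  have "S - B2 - B1 = S - B1 - B2"
    by blast
  with x have x': "x \<in> M (S - B2 - B1)"
    by simp
  have disj': "B2 \<inter> B1 = {}"
    using S by blast
  show ?thesis
    unfolding bracket_identity_def bracket_eq_single2_def a2a1_eq_a1a2_tau a_dprime_eq_a_prime_tau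
      tau_single2 a1a2_single2[OF S x] a_prime_single2[OF S x]
      a1a2_single2[OF S(1,3,2) disj' x'] a_prime_single2[OF S(1,3,2) disj' x'] ..
qed

lemma is_W_rep_iff_bracket_eq_single2:
  "is_W_rep M a \<longleftrightarrow> (\<forall>S B1 B2 x p q. finite S \<and> B1 \<subseteq> S \<and> B2 \<subseteq> S \<and> B1 \<inter> B2 = {}
     \<and> x \<in> M (S - B1 - B2) \<longrightarrow> bracket_eq_single2 \<alpha> \<omega> S B1 B2 x p q)"
  unfolding is_W_rep_iff_bracket_identity
proof (intro iffI allI impI ballI; (elim conjE)?)
  fix S B1 B2 x p q
  assume W: "\<forall>S. finite S \<longrightarrow> (\<forall>h\<in>SymSymM M S. bracket_identity S h)"
    and S: "finite S" "B1 \<subseteq> S" "B2 \<subseteq> S" "B1 \<inter> B2 = {}" and x: "x \<in> M (S - B1 - B2)"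
  have "bracket_identity S (single2 B1 B2 x)"
    using W S(1) single2_SymSymM[OF S x] by simp
  then show "bracket_eq_single2 \<alpha> \<omega> S B1 B2 x p q"
    by (simp add: bracket_identity_single2_iff[OF S x])
next
  fix S h
  assume gens: "\<forall>S B1 B2 x p q. finite S \<and> B1 \<subseteq> S \<and> B2 \<subseteq> S \<and> B1 \<inter> B2 = {}
     \<and> x \<in> M (S - B1 - B2) \<longrightarrow> bracket_eq_single2 \<alpha> \<omega> S B1 B2 x p q"
    and S: "finite S" and h: "h \<in> SymSymM M S"
  show "bracket_identity S h"
    using S h
  proof (induction rule: SymSymM_induct)
    case (single2 B1 B2 x)
    then show ?case
      using gens S by (simp add: bracket_identity_single2_iff)
  next
    case (add h h')
    then show ?case
      using S by (simp add: bracket_identity_add)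
  qed
qed

end

lemma decomposed_map_if_FB_map:
  assumes M: "FB_module scale M act" and a: "FB_map_SymM_VM scale M act a"
    and decomp: "\<And>S B x. finite S \<Longrightarrow> B \<subseteq> S \<Longrightarrow> x \<in> M (S - B) \<Longrightarrow>
        a S (single B x) =
          (\<lambda>i. if i \<in> B then \<omega> (S - {i}) (B - {i}) x else if i \<in> S then \<alpha> S i B x else 0)"
  shows "decomposed_map M a \<alpha> \<omega>"
proof
  have "module scale" and sub: "\<And>T. finite T \<Longrightarrow> module.subspace scale (M T)"
    using M unfolding FB_module_def by auto
  then show "finite T \<Longrightarrow> 0 \<in> M T" "finite T \<Longrightarrow> x \<in> M T \<Longrightarrow> y \<in> M T \<Longrightarrow> x + y \<in> M T" for T x y
    using module.subspace_0 module.subspace_add by blast+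
  show "finite S \<Longrightarrow> f \<in> SymM M S \<Longrightarrow> a S f \<in> VM M S"
    and "finite S \<Longrightarrow> f \<in> SymM M S \<Longrightarrow> g \<in> SymM M S \<Longrightarrow> a S (\<lambda>B. f B + g B) = (\<lambda>i. a S f i + a S g i)"
    for S f g
    using a unfolding FB_map_SymM_VM_def by blast+
  show "finite S \<Longrightarrow> B \<subseteq> S \<Longrightarrow> x \<in> M (S - B) \<Longrightarrow> a S (single B x) = decomp_map \<alpha> \<omega> S B x" for S B x
    using decomp by (simp add: decomp_map_def fun_eq_iff)
qed

theorem proposition6p6:
  fixes scale :: "'k::comm_ring_1 \<Rightarrow> 'm::ab_group_add \<Rightarrow> 'm"
    and M :: "'a set \<Rightarrow> 'm set"
    and act :: "('a \<Rightarrow> 'a) \<Rightarrow> 'a set \<Rightarrow> 'm \<Rightarrow> 'm"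
    and a :: "'a set \<Rightarrow> ('a set \<Rightarrow> 'm) \<Rightarrow> 'a \<Rightarrow> 'm"
    and \<alpha> :: "'a set \<Rightarrow> 'a \<Rightarrow> 'a set \<Rightarrow> 'm \<Rightarrow> 'm"
    and \<omega> :: "'a set \<Rightarrow> 'a set \<Rightarrow> 'm \<Rightarrow> 'm"
  assumes labels: "infinite (UNIV :: 'a set)"
    and M: "FB_module scale M act"
    and a: "FB_map_SymM_VM scale M act a"
    and decomp: "\<And>S B x. finite S \<Longrightarrow> B \<subseteq> S \<Longrightarrow> x \<in> M (S - B) \<Longrightarrow>
        a S (single B x) =
          (\<lambda>i. if i \<in> B then \<omega> (S - {i}) (B - {i}) x
               else if i \<in> S then \<alpha> S i B x else 0)"
  shows "is_W_rep M a \<longleftrightarrow>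
    (commute M is_singleton (alpha_family \<alpha>) is_singleton (alpha_family \<alpha>) \<and>
     commute M (\<lambda>A. A = {}) (omega_family \<omega>) (\<lambda>A. A = {}) (omega_family \<omega>) \<and>
     commute M is_singleton (alpha_family \<alpha>) (\<lambda>A. A = {}) (omega_family \<omega>) \<and>
     (\<forall>S A B i j x. finite S \<and> A \<subseteq> S \<and> B \<subseteq> S \<and> A \<inter> B = {} \<and> j \<in> B \<and> i \<in> S - (A \<union> B)
        \<and> x \<in> M (S - (A \<union> B)) \<longrightarrow>
        \<alpha> (S - {i}) j A (\<alpha> (S - A) i B x) = \<alpha> (S - {j}) i ((A \<union> B) - {j}) x) \<and>
     (\<forall>S A B j x. finite S \<and> A \<subseteq> S \<and> B \<subseteq> S \<and> A \<inter> B = {} \<and> j \<in> B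
        \<and> x \<in> M (S - (A \<union> B)) \<longrightarrow>
        \<alpha> S j A (\<omega> (S - A) B x) = \<omega> (S - {j}) ((A \<union> B) - {j}) x))"
proof -
  interpret decomposed_map M a \<alpha> \<omega>
    using M a decomp by (rule decomposed_map_if_FB_map)
  show ?thesis
    unfolding is_W_rep_iff_bracket_eq_single2 bracket_eq_single2_iff_relations[OF labels]
      alpha_alpha_relation_def alpha_omega_relation_def ..
qed

end
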